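(* Let $v_1,v_2\in L_2(0,1)$ be complex-valued, and for $\psi\in W_2^1(0,1)$ define $$A\psi(x)=i\psi'(x)+v_1(x)\Big[\psi(0)-\tfrac{i}{2}\langle\psi,v_1\rangle\Big]+v_2(x)\Big[\psi(1)+\tfrac{i}{2}\langle\psi,v_2\rangle\Big].$$ Then for all $\psi,\varphi\in W_2^1(0,1)$, $$\langle A\psi,\varphi\rangle-\langle\psi,A\varphi\rangle=i\Big\{\big[\psi(1)+i\langle\psi,v_2\rangle\big]\overline{\big[\varphi(1)+i\langle\varphi,v_2\rangle\big]}-\big[\psi(0)-i\langle\psi,v_1\rangle\big]\overline{\big[\varphi(0)-i\langle\varphi,v_1\rangle\big]}\Big\}.$$
   Context: $\langle f,g\rangle=\int_0^1 f(x)\overline{g(x)}\,dx$ is the inner product of $L_2(0,1)$; $W_2^1(0,1)$ is the Sobolev space. *)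

theory Defs
  imports "HOL-Analysis.Analysis"
begin

definition L2_01 :: "(real \<Rightarrow> complex) set" where
  "L2_01 = {f. f measurable_on {0..1} \<and> (\<lambda>x. (cmod (f x))^2) integrable_on {0..1}}"

definition ip01 :: "(real \<Rightarrow> complex) \<Rightarrow> (real \<Rightarrow> complex) \<Rightarrow> complex" where
  "ip01 f g = integral {0..1} (\<lambda>x. f x * cnj (g x))"

text \<open>psi is (the absolutely continuous representative of) an element of W_2^1(0,1)
  with weak derivative dpsi in L2(0,1).\<close>
definition W21_with_deriv :: "(real \<Rightarrow> complex) \<Rightarrow> (real \<Rightarrow> complex) \<Rightarrow> bool" where
  "W21_with_deriv psi dpsi \<longleftrightarrow> dpsi \<in> L2_01 \<and>
     (\<forall>x\<in>{0..1}. psi x = psi 0 + integral {0..x} dpsi)"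

definition opA :: "(real \<Rightarrow> complex) \<Rightarrow> (real \<Rightarrow> complex) \<Rightarrow> (real \<Rightarrow> complex)
    \<Rightarrow> (real \<Rightarrow> complex) \<Rightarrow> real \<Rightarrow> complex" where
  "opA v1 v2 psi dpsi x = \<i> * dpsi x
     + v1 x * (psi 0 - (\<i> / 2) * ip01 psi v1)
     + v2 x * (psi 1 + (\<i> / 2) * ip01 psi v2)"

end

(*
  Expand both inner products by sesquilinearity.  The derivative terms give
  i (<psi',phi> + <psi,phi'>), which by integration by parts is i [psi conj phi] from 0 to 1;
  together with the rank-one potential terms this is the right-hand side by a purely algebraic
  identity.  Integration by parts is needed for absolutely continuous functions whose
  derivatives are merely integrable; it follows from Fubini's theorem on the triangle t <= x.
*)

theory Submission
  imports Defs
begin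

lemma sigma_finite_lebesgue: "sigma_finite_measure (lebesgue :: 'a::euclidean_space measure)"
proof
  obtain A :: "'a set set" where "countable A" "A \<subseteq> sets lborel" "\<Union>A = space lborel"
    "\<forall>a\<in>A. emeasure lborel a \<noteq> \<infinity>"
    using lborel.sigma_finite_countable by blast
  then show "\<exists>A. countable A \<and> A \<subseteq> sets lebesgue \<and> \<Union>A = space lebesgue \<and>
      (\<forall>a\<in>A. emeasure (lebesgue :: 'a measure) a \<noteq> \<infinity>)"
    by (intro exI[of _ A]) (auto simp: subset_iff)
qed

interpretation lebesgue_pair: pair_sigma_finite "lebesgue :: real measure" "lebesgue :: real measure"
  by (simp add: pair_sigma_finite.intro sigma_finite_lebesgue)

lemma lebesgue_integral_indicator_eq_integral:
  fixes f :: "real \<Rightarrow> 'a::euclidean_space"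
  assumes "f absolutely_integrable_on {a..b}"
  shows "(\<integral>x. indicator {a..b} x *\<^sub>R f x \<partial>lebesgue) = integral {a..b} f"
  using set_lebesgue_integral_eq_integral(2)[OF assms] by (simp add: set_lebesgue_integral_def)

lemma integrable_lebesgue_pair_triangle:
  fixes F H :: "real \<Rightarrow> complex"
  assumes F: "integrable lebesgue F" and H: "integrable lebesgue H"
  shows "integrable (lebesgue \<Otimes>\<^sub>M lebesgue) (\<lambda>(x, t). if t \<le> x then F x * H t else 0)"
proof -
  have [measurable]: "F \<in> borel_measurable lebesgue" "H \<in> borel_measurable lebesgue"
    using F H by auto
  have [measurable]: "fst \<in> borel_measurable (lebesgue \<Otimes>\<^sub>M lebesgue :: (real \<times> real) measure)"
      "snd \<in> borel_measurable (lebesgue \<Otimes>\<^sub>M lebesgue :: (real \<times> real) measure)"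
    using measurable_compose[OF measurable_fst id_borel_measurable_lebesgue]
      measurable_compose[OF measurable_snd id_borel_measurable_lebesgue] by (simp_all add: comp_def)
  have "integrable (lebesgue \<Otimes>\<^sub>M lebesgue) (\<lambda>(x, t). F x * H t)"
  proof (rule lebesgue_pair.Fubini_integrable)
    show "(\<lambda>(x, t). F x * H t) \<in> borel_measurable (lebesgue \<Otimes>\<^sub>M lebesgue)"
      unfolding case_prod_beta by measurable
    show "integrable lebesgue (\<lambda>x. \<integral>t. norm (case (x, t) of (x, t) \<Rightarrow> F x * H t) \<partial>lebesgue)"
      using F by (simp add: norm_mult)
    show "AE x in lebesgue. integrable lebesgue (\<lambda>t. case (x, t) of (x, t) \<Rightarrow> F x * H t)"
      using H by simp
  qed
  moreover have "(\<lambda>(x, t). if t \<le> x then F x * H t else 0) \<in> borel_measurable (lebesgue \<Otimes>\<^sub>M lebesgue)"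
    unfolding case_prod_beta by measurable
  ultimately show ?thesis
    by (rule Bochner_Integration.integrable_bound) (auto simp: norm_mult)
qed

lemma Fubini_indefinite_integral:
  fixes f h :: "real \<Rightarrow> complex"
  assumes f: "f absolutely_integrable_on {a..b}" and h: "h absolutely_integrable_on {a..b}"
  shows "(\<lambda>x. f x * integral {a..x} h) absolutely_integrable_on {a..b}"
    and "(\<lambda>t. integral {t..b} f * h t) absolutely_integrable_on {a..b}"
    and "integral {a..b} (\<lambda>x. f x * integral {a..x} h) = integral {a..b} (\<lambda>t. integral {t..b} f * h t)"
proof -
  define F where "F = (\<lambda>x. indicator {a..b} x *\<^sub>R f x)"
  define H where "H = (\<lambda>t. indicator {a..b} t *\<^sub>R h t)"
  define k where "k = (\<lambda>x t. if t \<le> x then F x * H t else 0)"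
  \<comment> \<open>Both sides are the integral of \<open>f x * h t\<close> over the triangle \<open>a \<le> t \<le> x \<le> b\<close>.\<close>
  have "integrable lebesgue F" "integrable lebesgue H"
    using f h by (simp_all add: F_def H_def set_integrable_def)
  then have k_int: "integrable (lebesgue \<Otimes>\<^sub>M lebesgue) (case_prod k)"
    unfolding k_def by (rule integrable_lebesgue_pair_triangle)
  have inner_t: "(\<integral>t. k x t \<partial>lebesgue) = indicator {a..b} x *\<^sub>R (f x * integral {a..x} h)" for x
  proof (cases "x \<in> {a..b}")
    case True
    have "(\<integral>t. k x t \<partial>lebesgue) = (\<integral>t. f x * (indicator {a..x} t *\<^sub>R h t) \<partial>lebesgue)"
      using True by (intro Bochner_Integration.integral_cong) (auto simp: k_def F_def H_def split: split_indicator)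
    also have "\<dots> = f x * (\<integral>t. indicator {a..x} t *\<^sub>R h t \<partial>lebesgue)"
      by (rule integral_mult_right_zero)
    also have "\<dots> = f x * integral {a..x} h"
      using True absolutely_integrable_on_subinterval[OF h, of a x]
      by (simp add: lebesgue_integral_indicator_eq_integral)
    finally show ?thesis using True by simp
  next
    case False
    then have "(\<lambda>t. k x t) = (\<lambda>t. 0)" unfolding k_def F_def by auto
    with False show ?thesis by simp
  qed
  have inner_x: "(\<integral>x. k x t \<partial>lebesgue) = indicator {a..b} t *\<^sub>R (integral {t..b} f * h t)" for t
  proof (cases "t \<in> {a..b}")
    case True
    have "(\<integral>x. k x t \<partial>lebesgue) = (\<integral>x. (indicator {t..b} x *\<^sub>R f x) * h t \<partial>lebesgue)"
      using True by (intro Bochner_Integration.integral_cong) (auto simp: k_def F_def H_def split: split_indicator)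
    also have "\<dots> = (\<integral>x. indicator {t..b} x *\<^sub>R f x \<partial>lebesgue) * h t"
      by (rule integral_mult_left_zero)
    also have "\<dots> = integral {t..b} f * h t"
      using True absolutely_integrable_on_subinterval[OF f, of t b]
      by (simp add: lebesgue_integral_indicator_eq_integral)
    finally show ?thesis using True by simp
  next
    case False
    then have "(\<lambda>x. k x t) = (\<lambda>x. 0)" unfolding k_def H_def by auto
    with False show ?thesis by simp
  qed
  show int_x: "(\<lambda>x. f x * integral {a..x} h) absolutely_integrable_on {a..b}"
    using lebesgue_pair.integrable_fst'[OF k_int] by (simp add: set_integrable_def inner_t)
  show int_t: "(\<lambda>t. integral {t..b} f * h t) absolutely_integrable_on {a..b}"
    using lebesgue_pair.integrable_snd[OF k_int] by (simp add: set_integrable_def inner_x)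
  show "integral {a..b} (\<lambda>x. f x * integral {a..x} h) = integral {a..b} (\<lambda>t. integral {t..b} f * h t)"
    using lebesgue_pair.Fubini_integral[OF k_int]
    by (simp add: inner_t inner_x lebesgue_integral_indicator_eq_integral int_x int_t)
qed

lemma has_integral_indefinite_integral_product:
  fixes f h :: "real \<Rightarrow> complex"
  assumes f: "f absolutely_integrable_on {a..b}" and h: "h absolutely_integrable_on {a..b}"
  shows "((\<lambda>x. f x * integral {a..x} h + integral {a..x} f * h x)
      has_integral integral {a..b} f * integral {a..b} h) {a..b}"
proof -
  have f_int: "f integrable_on {a..b}" and h_int: "h integrable_on {a..b}"
    using f h by (simp_all add: set_lebesgue_integral_eq_integral(1))
  have tail: "integral {x..b} f = integral {a..b} f - integral {a..x} f" if "x \<in> {a..b}" for x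
    using Henstock_Kurzweil_Integration.integral_combine[OF _ _ f_int, of x] that by (simp add: algebra_simps)
  note Fubini = Fubini_indefinite_integral[OF f h]
  have lower: "((\<lambda>x. f x * integral {a..x} h) has_integral integral {a..b} (\<lambda>t. integral {t..b} f * h t)) {a..b}"
    using integrable_integral[OF set_lebesgue_integral_eq_integral(1)[OF Fubini(1)]] Fubini(3) by simp
  have upper: "((\<lambda>t. integral {t..b} f * h t) has_integral integral {a..b} (\<lambda>t. integral {t..b} f * h t)) {a..b}"
    by (rule integrable_integral[OF set_lebesgue_integral_eq_integral(1)[OF Fubini(2)]])
  have whole: "((\<lambda>t. integral {a..b} f * h t) has_integral integral {a..b} f * integral {a..b} h) {a..b}"
    using h_int by (intro has_integral_mult_right integrable_integral)
  from has_integral_add[OF lower has_integral_diff[OF whole upper]]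
  have "((\<lambda>x. f x * integral {a..x} h + (integral {a..b} f * h x - integral {x..b} f * h x))
      has_integral integral {a..b} f * integral {a..b} h) {a..b}"
    by simp
  then show ?thesis
  proof (rule has_integral_eq[rotated])
    fix x assume "x \<in> {a..b}"
    then show "f x * integral {a..x} h + (integral {a..b} f * h x - integral {x..b} f * h x)
        = f x * integral {a..x} h + integral {a..x} f * h x"
      by (simp only: tail) (simp add: algebra_simps)
  qed
qed

lemma integration_by_parts_absolutely_integrable:
  fixes f g F G :: "real \<Rightarrow> complex"
  assumes "a \<le> b"
    and f: "f absolutely_integrable_on {a..b}" and g: "g absolutely_integrable_on {a..b}"
    and F: "\<And>x. x \<in> {a..b} \<Longrightarrow> F x = F a + integral {a..x} f"
    and G: "\<And>x. x \<in> {a..b} \<Longrightarrow> G x = G a + integral {a..x} g"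
  shows "((\<lambda>x. f x * G x + F x * g x) has_integral F b * G b - F a * G a) {a..b}"
proof -
  have f_int: "f integrable_on {a..b}" and g_int: "g integrable_on {a..b}"
    using f g by (simp_all add: set_lebesgue_integral_eq_integral(1))
  have "((\<lambda>x. G a * f x + F a * g x) has_integral G a * integral {a..b} f + F a * integral {a..b} g) {a..b}"
    using f_int g_int by (intro has_integral_add has_integral_mult_right integrable_integral)
  from has_integral_add[OF this has_integral_indefinite_integral_product[OF f g]]
  have "((\<lambda>x. f x * G x + F x * g x) has_integral
      G a * integral {a..b} f + F a * integral {a..b} g + integral {a..b} f * integral {a..b} g) {a..b}"
  proof (rule has_integral_eq[rotated])
    fix x assume "x \<in> {a..b}"
    then show "G a * f x + F a * g x + (f x * integral {a..x} g + integral {a..x} f * g x)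
        = f x * G x + F x * g x"
      by (simp only: F G) (simp add: algebra_simps)
  qed
  moreover have "F b = F a + integral {a..b} f" "G b = G a + integral {a..b} g"
    using F[of b] G[of b] \<open>a \<le> b\<close> by simp_all
  ultimately show ?thesis
    by (simp add: algebra_simps)
qed

lemma L2_01_mult_cnj_absolutely_integrable:
  assumes f: "f \<in> L2_01" and g: "g \<in> L2_01"
  shows "(\<lambda>x. f x * cnj (g x)) absolutely_integrable_on {0..1}"
proof (rule measurable_bounded_by_integrable_imp_absolutely_integrable)
  show S: "{0..1::real} \<in> sets lebesgue" by simp
  have "(\<lambda>x. f x * cnj (g x)) measurable_on {0..1}"
    using measurable_on_bilinear[of "\<lambda>a b. a * cnj b" f "{0..1}" g] f g
    by (simp add: L2_01_def bilinear_def linear_iff algebra_simps)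
  then show "(\<lambda>x. f x * cnj (g x)) \<in> borel_measurable (lebesgue_on {0..1})"
    using measurable_on_iff_borel_measurable[OF S] by blast
  show "(\<lambda>x. (cmod (f x))\<^sup>2 + (cmod (g x))\<^sup>2) integrable_on {0..1}"
    using f g by (intro integrable_add) (simp_all add: L2_01_def)
  fix x :: real
  have "0 \<le> cmod (f x) * cmod (g x)"
    by simp
  then show "norm (f x * cnj (g x)) \<le> (cmod (f x))\<^sup>2 + (cmod (g x))\<^sup>2"
    using sum_squares_bound[of "cmod (f x)" "cmod (g x)"]
    unfolding norm_mult complex_mod_cnj mult.assoc by linarith
qed

lemma continuous_on_imp_L2_01:
  assumes "continuous_on {0..1} f"
  shows "f \<in> L2_01"
proof -
  have S: "{0..1::real} \<in> sets lebesgue" by simp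
  have "f measurable_on {0..1}"
    using continuous_imp_measurable_on_sets_lebesgue[OF assms S] measurable_on_iff_borel_measurable[OF S]
    by blast
  moreover have "(\<lambda>x. (cmod (f x))\<^sup>2) integrable_on {0..1}"
    by (intro integrable_continuous_interval continuous_intros assms)
  ultimately show ?thesis
    unfolding L2_01_def by blast
qed

lemma L2_01_absolutely_integrable:
  assumes "f \<in> L2_01"
  shows "f absolutely_integrable_on {0..1}"
    and "(\<lambda>x. cnj (f x)) absolutely_integrable_on {0..1}"
  using L2_01_mult_cnj_absolutely_integrable[OF assms, of "\<lambda>x. 1"]
    L2_01_mult_cnj_absolutely_integrable[OF _ assms, of "\<lambda>x. 1"]
  by (simp_all add: continuous_on_imp_L2_01)

lemma L2_01_mult_cnj_integrable:
  "f \<in> L2_01 \<Longrightarrow> g \<in> L2_01 \<Longrightarrow> (\<lambda>x. f x * cnj (g x)) integrable_on {0..1}"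
  using L2_01_mult_cnj_absolutely_integrable set_lebesgue_integral_eq_integral(1) by blast

lemma W21_with_deriv_deriv_L2_01: "W21_with_deriv psi dpsi \<Longrightarrow> dpsi \<in> L2_01"
  unfolding W21_with_deriv_def by blast

lemma W21_with_deriv_eq_indefinite_integral:
  "W21_with_deriv psi dpsi \<Longrightarrow> x \<in> {0..1} \<Longrightarrow> psi x = psi 0 + integral {0..x} dpsi"
  unfolding W21_with_deriv_def by blast

lemma W21_with_deriv_continuous_on:
  assumes "W21_with_deriv psi dpsi"
  shows "continuous_on {0..1} psi"
proof -
  have "dpsi integrable_on {0..1}"
    using L2_01_absolutely_integrable(1)[OF W21_with_deriv_deriv_L2_01[OF assms]]
      set_lebesgue_integral_eq_integral(1) by blast
  then have "continuous_on {0..1} (\<lambda>x. psi 0 + integral {0..x} dpsi)"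
    by (intro continuous_intros indefinite_integral_continuous_1)
  then show ?thesis
    by (rule continuous_on_eq) (rule W21_with_deriv_eq_indefinite_integral[OF assms, symmetric])
qed

lemma W21_with_deriv_L2_01: "W21_with_deriv psi dpsi \<Longrightarrow> psi \<in> L2_01"
  by (intro continuous_on_imp_L2_01 W21_with_deriv_continuous_on)

lemma W21_with_deriv_integration_by_parts:
  assumes psi: "W21_with_deriv psi dpsi" and phi: "W21_with_deriv phi dphi"
  shows "ip01 dpsi phi + ip01 psi dphi = psi 1 * cnj (phi 1) - psi 0 * cnj (phi 0)"
proof -
  have dpsi: "dpsi \<in> L2_01" and dphi: "dphi \<in> L2_01"
    using psi phi by (simp_all only: W21_with_deriv_deriv_L2_01)
  have "((\<lambda>x. dpsi x * cnj (phi x) + psi x * cnj (dphi x))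
      has_integral psi 1 * cnj (phi 1) - psi 0 * cnj (phi 0)) {0..1}"
  proof (rule integration_by_parts_absolutely_integrable)
    show "dpsi absolutely_integrable_on {0..1}"
      using dpsi by (rule L2_01_absolutely_integrable)
    show "(\<lambda>x. cnj (dphi x)) absolutely_integrable_on {0..1}"
      using dphi by (rule L2_01_absolutely_integrable)
    show "psi x = psi 0 + integral {0..x} dpsi" if "x \<in> {0..1}" for x
      using psi that by (rule W21_with_deriv_eq_indefinite_integral)
    show "cnj (phi x) = cnj (phi 0) + integral {0..x} (\<lambda>t. cnj (dphi t))" if "x \<in> {0..1}" for x
      using W21_with_deriv_eq_indefinite_integral[OF phi that] by (simp add: integral_cnj)
  qed simp
  moreover have "ip01 dpsi phi + ip01 psi dphi
      = integral {0..1} (\<lambda>x. dpsi x * cnj (phi x) + psi x * cnj (dphi x))"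
    unfolding ip01_def
    by (intro integral_add[symmetric] L2_01_mult_cnj_integrable dpsi dphi
        W21_with_deriv_L2_01[OF psi] W21_with_deriv_L2_01[OF phi])
  ultimately show ?thesis
    by (simp add: integral_unique)
qed

lemma ip01_cnj_commute: "ip01 f g = cnj (ip01 g f)"
  unfolding ip01_def integral_cnj by (simp add: mult.commute)

lemma ip01_opA_left:
  assumes "v1 \<in> L2_01" "v2 \<in> L2_01" "dpsi \<in> L2_01" "phi \<in> L2_01"
  shows "ip01 (opA v1 v2 psi dpsi) phi = \<i> * ip01 dpsi phi
      + (psi 0 - (\<i> / 2) * ip01 psi v1) * ip01 v1 phi + (psi 1 + (\<i> / 2) * ip01 psi v2) * ip01 v2 phi"
proof -
  define c1 where "c1 = psi 0 - (\<i> / 2) * ip01 psi v1"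
  define c2 where "c2 = psi 1 + (\<i> / 2) * ip01 psi v2"
  have "ip01 (opA v1 v2 psi dpsi) phi = integral {0..1}
      (\<lambda>x. \<i> * (dpsi x * cnj (phi x)) + c1 * (v1 x * cnj (phi x)) + c2 * (v2 x * cnj (phi x)))"
    unfolding ip01_def opA_def c1_def c2_def by (simp add: algebra_simps)
  also have "\<dots> = \<i> * ip01 dpsi phi + c1 * ip01 v1 phi + c2 * ip01 v2 phi"
    unfolding ip01_def using assms
    by (simp add: integral_add integrable_add integrable_on_mult_right L2_01_mult_cnj_integrable)
  finally show ?thesis
    unfolding c1_def c2_def .
qed

theorem lemma5p1:
  fixes v1 v2 psi dpsi phi dphi :: "real \<Rightarrow> complex"
  assumes "v1 \<in> L2_01" and "v2 \<in> L2_01"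
    and "W21_with_deriv psi dpsi" and "W21_with_deriv phi dphi"
  shows "ip01 (opA v1 v2 psi dpsi) phi - ip01 psi (opA v1 v2 phi dphi)
    = \<i> * ((psi 1 + \<i> * ip01 psi v2) * cnj (phi 1 + \<i> * ip01 phi v2)
           - (psi 0 - \<i> * ip01 psi v1) * cnj (phi 0 - \<i> * ip01 phi v1))"
proof -
  have L2: "dpsi \<in> L2_01" "dphi \<in> L2_01" "psi \<in> L2_01" "phi \<in> L2_01"
    using assms(3,4) by (simp_all only: W21_with_deriv_deriv_L2_01 W21_with_deriv_L2_01)
  have left: "ip01 (opA v1 v2 psi dpsi) phi = \<i> * ip01 dpsi phi
      + (psi 0 - (\<i> / 2) * ip01 psi v1) * cnj (ip01 phi v1)
      + (psi 1 + (\<i> / 2) * ip01 psi v2) * cnj (ip01 phi v2)"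
    using ip01_opA_left[OF assms(1,2) L2(1,4)]
    by (simp only: ip01_cnj_commute[of v1 phi] ip01_cnj_commute[of v2 phi])
  have right: "ip01 psi (opA v1 v2 phi dphi) = - \<i> * ip01 psi dphi
      + cnj (phi 0 - (\<i> / 2) * ip01 phi v1) * ip01 psi v1
      + cnj (phi 1 + (\<i> / 2) * ip01 phi v2) * ip01 psi v2"
    using ip01_opA_left[OF assms(1,2) L2(2,3)]
      ip01_cnj_commute[of psi "opA v1 v2 phi dphi"] ip01_cnj_commute[of dphi psi]
      ip01_cnj_commute[of v1 psi] ip01_cnj_commute[of v2 psi]
    by simp
  have parts: "ip01 dpsi phi = psi 1 * cnj (phi 1) - psi 0 * cnj (phi 0) - ip01 psi dphi"
    using W21_with_deriv_integration_by_parts[OF assms(3,4)] by (simp add: algebra_simps)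
  show ?thesis
    unfolding left right parts by (simp add: algebra_simps)
qed

end
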